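(* Let $\mathcal{H}_A,\mathcal{H}_B$ be finite-dimensional Hilbert spaces with a fixed reference basis $\{|i\rangle_A\}$ of $\mathcal{H}_A$. For every state $\rho_{AB}$ on $\mathcal{H}_A\otimes\mathcal{H}_B$ with reduced state $\rho_A$, $$C^{A|B}_{l_1}(\rho_{AB})^2-C_{l_1}(\rho_A)^2\geq 2\left(\mathrm{Tr}\,\rho_{AB}^2-\mathrm{Tr}\,\rho_A^2\right).$$
   Context: $C_{l_1}(\rho_A)=\sum_{i\neq j}|\langle i|\rho_A|j\rangle|$. Writing $\rho_{AB}=\sum_{i,j}|i\rangle\langle j|_A\otimes\rho^B_{ij}$ with $\rho^B_{ij}=\langle i|\rho_{AB}|j\rangle_A$, $C^{A|B}_{l_1}(\rho_{AB})=\sum_{i\neq j}\|\rho^B_{ij}\|_{\mathrm{tr}}$, where $\|X\|_{\mathrm{tr}}=\mathrm{Tr}\sqrt{X^\dagger X}$. *)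

theory Defs
  imports "HOL-Analysis.Analysis"
begin

text \<open>Operators on a finite-dimensional Hilbert space with orthonormal reference
basis indexed by a finite type 'n are represented as complex 'n x 'n matrices.
A bipartite space H_A (x) H_B has basis indexed by 'a x 'b.\<close>

definition cnj_transpose :: "complex^'n^'m \<Rightarrow> complex^'m^'n" where
  "cnj_transpose A = (\<chi> i j. cnj (A $ j $ i))"

definition psd :: "complex^'n^'n \<Rightarrow> bool" where
  "psd A \<longleftrightarrow> cnj_transpose A = A \<and>
     (\<forall>x::complex^'n. 0 \<le> Re (\<Sum>i\<in>UNIV. \<Sum>j\<in>UNIV. cnj (x $ i) * A $ i $ j * x $ j))"

definition mat_sqrt :: "complex^'n^'n \<Rightarrow> complex^'n^'n" where
  "mat_sqrt M = (THE Y. psd Y \<and> Y ** Y = M)"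

definition trace_norm :: "complex^'n^'m \<Rightarrow> real" where
  "trace_norm X = Re (trace (mat_sqrt (cnj_transpose X ** X)))"

definition density_op :: "complex^'n^'n \<Rightarrow> bool" where
  "density_op \<rho> \<longleftrightarrow> psd \<rho> \<and> trace \<rho> = 1"

definition ptrace_B :: "complex^('a::finite \<times> 'b::finite)^('a \<times> 'b) \<Rightarrow> complex^'a^'a" where
  "ptrace_B \<rho> = (\<chi> i j. \<Sum>k\<in>UNIV. \<rho> $ (i, k) $ (j, k))"

definition block_B :: "complex^('a::finite \<times> 'b::finite)^('a \<times> 'b) \<Rightarrow> 'a \<Rightarrow> 'a \<Rightarrow> complex^'b^'b" where
  "block_B \<rho> i j = (\<chi> k l. \<rho> $ (i, k) $ (j, l))"

definition l1_coherence :: "complex^'a^'a \<Rightarrow> real" where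
  "l1_coherence \<rho> = (\<Sum>i\<in>UNIV. \<Sum>j\<in>UNIV - {i}. cmod (\<rho> $ i $ j))"

definition l1_coherence_AB :: "complex^('a::finite \<times> 'b::finite)^('a \<times> 'b) \<Rightarrow> real" where
  "l1_coherence_AB \<rho> = (\<Sum>i\<in>UNIV. \<Sum>j\<in>UNIV - {i}. trace_norm (block_B \<rho> i j))"

end

(*
  Write rho = sum_ij |i><j| (x) rho_ij and put t_ij = ||rho_ij||_tr, c_ij = |Tr rho_ij| = |(rho_A)_ij|
  and f_ij = ||rho_ij||_F^2.  Then Tr rho^2 = sum_ij f_ij and Tr rho_A^2 = sum_ij c_ij^2, and the
  operator inequalities |Tr X| <= ||X||_tr and ||X||_F <= ||X||_tr, together with ||X||_tr = Tr X
  for the positive diagonal blocks, reduce the theorem to an inequality between real numbers.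
  Both operator inequalities come from expressing ||X||_tr as the sum of the singular values
  ||X v_k||, v an orthonormal eigenbasis of X^* X; this needs the spectral theorem for Hermitian
  matrices, obtained by maximising the quadratic form over unit vectors, and the uniqueness of
  positive square roots.
*)
theory Submission
  imports Defs
begin

section \<open>The complex inner product\<close>

definition cinner :: "complex^'n \<Rightarrow> complex^'n \<Rightarrow> complex" where
  "cinner x y = (\<Sum>i\<in>UNIV. cnj (x $ i) * y $ i)"

definition hermitian :: "complex^'n^'n \<Rightarrow> bool" where
  "hermitian A \<longleftrightarrow> cnj_transpose A = A"

lemma scaleR_eq_of_real_scale: "r *\<^sub>R (y::complex^'n) = of_real r *s y"
  unfolding vec_eq_iff by (simp add: scaleR_conv_of_real[where 'a=complex])

lemma matrix_vector_mult_complex_scaleR: "A *v (r *\<^sub>R x) = r *\<^sub>R (A *v (x::complex^'n))"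
  by (simp add: scaleR_eq_of_real_scale vector_scalar_commute)

lemma cinner_add_right: "cinner x (y + z) = cinner x y + cinner x z"
  unfolding cinner_def by (simp add: distrib_left sum.distrib)

lemma cinner_add_left: "cinner (x + y) z = cinner x z + cinner y z"
  unfolding cinner_def by (simp add: distrib_right sum.distrib)

lemma cinner_diff_right: "cinner x (y - z) = cinner x y - cinner x z"
  unfolding cinner_def by (simp add: right_diff_distrib sum_subtractf)

lemma cinner_diff_left: "cinner (x - y) z = cinner x z - cinner y z"
  unfolding cinner_def by (simp add: left_diff_distrib sum_subtractf)

lemma cinner_scale_right: "cinner x (c *s y) = c * cinner x y"
  unfolding cinner_def by (simp add: sum_distrib_left algebra_simps)

lemma cinner_scale_left: "cinner (c *s x) y = cnj c * cinner x y"
  unfolding cinner_def by (simp add: sum_distrib_left algebra_simps)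

lemma cinner_scaleR_right: "cinner x (r *\<^sub>R y) = of_real r * cinner x y"
  by (simp add: scaleR_eq_of_real_scale cinner_scale_right)

lemma cinner_scaleR_left: "cinner (r *\<^sub>R x) y = of_real r * cinner x y"
  by (simp add: scaleR_eq_of_real_scale cinner_scale_left)

lemma cinner_sum_right: "cinner x (sum f S) = (\<Sum>i\<in>S. cinner x (f i))"
  unfolding cinner_def by (simp add: sum_distrib_left sum.swap[of _ S])

lemma cnj_cinner: "cnj (cinner x y) = cinner y x"
  unfolding cinner_def by (simp add: mult.commute)

lemma cinner_zero_right [simp]: "cinner x 0 = 0"
  unfolding cinner_def by simp

lemma cinner_self: "cinner x x = of_real ((norm x)\<^sup>2)"
proof -
  have "cinner x x = (\<Sum>i\<in>UNIV. of_real ((cmod (x $ i))\<^sup>2))"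
    unfolding cinner_def by (intro sum.cong refl) (metis complex_norm_square mult.commute)
  also have "\<dots> = of_real ((norm x)\<^sup>2)"
    unfolding norm_vec_def L2_set_def by (simp add: sum_nonneg)
  finally show ?thesis .
qed

lemma cinner_self_norm_1: "norm x = 1 \<Longrightarrow> cinner x x = 1"
  by (simp add: cinner_self)

lemma norm_cinner_le: "cmod (cinner x y) \<le> norm x * norm y"
proof -
  have "cmod (cinner x y) \<le> (\<Sum>i\<in>UNIV. cmod (cnj (x $ i) * y $ i))"
    unfolding cinner_def by (rule norm_sum)
  also have "\<dots> = (\<Sum>i\<in>UNIV. \<bar>cmod (x $ i)\<bar> * \<bar>cmod (y $ i)\<bar>)"
    by (simp add: norm_mult)
  also have "\<dots> \<le> norm x * norm y"
    unfolding norm_vec_def by (rule L2_set_mult_ineq)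
  finally show ?thesis .
qed

lemma cinner_form: "(\<Sum>i\<in>UNIV. \<Sum>j\<in>UNIV. cnj (x $ i) * A $ i $ j * y $ j) = cinner x (A *v y)"
  unfolding cinner_def matrix_vector_mult_def by (simp add: sum_distrib_left mult.assoc)

lemma cinner_mat_right: "cinner x (A *v y) = cinner (cnj_transpose A *v x) y"
proof -
  have "cinner x (A *v y) = (\<Sum>j\<in>UNIV. \<Sum>i\<in>UNIV. cnj (x $ i) * A $ i $ j * y $ j)"
    unfolding cinner_form[symmetric] by (rule sum.swap)
  also have "\<dots> = cinner (cnj_transpose A *v x) y"
    unfolding cinner_def matrix_vector_mult_def cnj_transpose_def
    by (simp add: sum_distrib_right sum_distrib_left mult_ac)
  finally show ?thesis .
qed

lemma hermitian_cinner: "hermitian A \<Longrightarrow> cinner x (A *v y) = cinner (A *v x) y"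
  by (simp add: cinner_mat_right hermitian_def)

lemma hermitian_entry: "hermitian A \<Longrightarrow> cnj (A $ i $ j) = A $ j $ i"
  unfolding hermitian_def cnj_transpose_def by (metis vec_lambda_beta)

lemma hermitian_form_real: "hermitian A \<Longrightarrow> cinner x (A *v x) = of_real (Re (cinner x (A *v x)))"
  by (metis Reals_cnj_iff cnj_cinner hermitian_cinner of_real_Re)

lemma psd_iff: "psd A \<longleftrightarrow> hermitian A \<and> (\<forall>x. 0 \<le> Re (cinner x (A *v x)))"
  unfolding psd_def hermitian_def cinner_form by simp

lemma nonpos_if_linear_le_quadratic:
  fixes a b :: real
  assumes "\<And>t. t > 0 \<Longrightarrow> t * a \<le> t\<^sup>2 * b"
  shows "a \<le> 0"
proof (rule ccontr)
  assume "\<not> a \<le> 0"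
  hence a: "a > 0" by simp
  define t where "t = a / (\<bar>b\<bar> + 1)"
  have t: "t > 0" using a by (simp add: t_def add_pos_nonneg)
  have "a \<le> t * b" using assms[OF t] t by (simp add: power2_eq_square mult.assoc)
  also have "\<dots> \<le> t * \<bar>b\<bar>" using t by (simp add: mult_left_mono)
  also have "\<dots> = a * (\<bar>b\<bar> / (\<bar>b\<bar> + 1))" unfolding t_def by simp
  also have "\<dots> < a * 1" using a by (intro mult_strict_left_mono) auto
  finally show False by simp
qed

section \<open>The spectral theorem\<close>

definition orthonormal_on :: "('i \<Rightarrow> complex^'n) \<Rightarrow> 'i set \<Rightarrow> bool" where
  "orthonormal_on v S \<longleftrightarrow> (\<forall>i\<in>S. \<forall>j\<in>S. cinner (v i) (v j) = (if i = j then 1 else 0))"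

definition eigenvectors_on :: "complex^'n^'n \<Rightarrow> ('i \<Rightarrow> complex^'n) \<Rightarrow> 'i set \<Rightarrow> bool" where
  "eigenvectors_on A v S \<longleftrightarrow> (\<forall>i\<in>S. A *v v i = cinner (v i) (A *v v i) *s v i)"

lemma orthonormal_on_norm:
  assumes "orthonormal_on v S" and "k \<in> S"
  shows "norm (v k) = 1"
proof -
  have "cinner (v k) (v k) = 1" using assms unfolding orthonormal_on_def by simp
  hence "(norm (v k))\<^sup>2 = 1" unfolding cinner_self by (metis of_real_1 of_real_eq_iff)
  hence "norm (v k) = 1 \<or> norm (v k) = -1" by (simp add: power2_eq_1_iff)
  thus ?thesis using norm_ge_zero[of "v k"] by linarith
qed

lemma unit_vector_orthogonal_to:
  fixes v :: "'i \<Rightarrow> complex^'n"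
  assumes fin: "finite S" and card: "card S < CARD('n)" and on: "orthonormal_on v S"
  shows "\<exists>z. norm z = 1 \<and> (\<forall>i\<in>S. cinner (v i) z = 0)"
proof -
  have "vec.dim (vec.span (v ` S)) \<le> card (v ` S)"
    by (rule vec.dim_le_card) (auto simp: fin)
  also have "\<dots> \<le> card S" by (rule card_image_le[OF fin])
  also have "\<dots> < vec.dim (UNIV :: (complex^'n) set)" using card vec_dim_card by metis
  finally have "vec.span (v ` S) \<noteq> UNIV" by (metis less_irrefl)
  then obtain y where y: "y \<notin> vec.span (v ` S)" by auto
  \<comment> \<open>Gram--Schmidt step: remove from y its components along the v i.\<close>
  define z0 where "z0 = y - (\<Sum>i\<in>S. cinner (v i) y *s v i)"
  have "(\<Sum>i\<in>S. cinner (v i) y *s v i) \<in> vec.span (v ` S)"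
    by (intro vec.span_sum vec.span_scale vec.span_base) auto
  hence z0: "z0 \<noteq> 0" using y unfolding z0_def by auto
  have orth: "cinner (v k) z0 = 0" if k: "k \<in> S" for k
  proof -
    have "(\<Sum>i\<in>S. cinner (v k) (cinner (v i) y *s v i)) = (\<Sum>i\<in>S. if i = k then cinner (v k) y else 0)"
      using on k unfolding orthonormal_on_def by (intro sum.cong refl) (auto simp: cinner_scale_right)
    also have "\<dots> = cinner (v k) y" using k fin by simp
    finally show ?thesis unfolding z0_def by (simp add: cinner_diff_right cinner_sum_right)
  qed
  show ?thesis
    using z0 orth by (intro exI[of _ "(1 / norm z0) *\<^sub>R z0"]) (simp add: cinner_scaleR_right)
qed

lemma rayleigh_maximizer_is_eigenvector:
  assumes herm: "hermitian A" and W: "vec.subspace W" and AW: "\<And>x. x \<in> W \<Longrightarrow> A *v x \<in> W"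
    and x0: "x0 \<in> W" "norm x0 = 1"
    and max: "\<And>y. y \<in> W \<Longrightarrow> Re (cinner y (A *v y)) \<le> Re (cinner x0 (A *v x0)) * (norm y)\<^sup>2"
  shows "A *v x0 = cinner x0 (A *v x0) *s x0"
proof -
  define L where "L = Re (cinner x0 (A *v x0))"
  define lm where "lm = cinner x0 (A *v x0)"
  have lm: "lm = of_real L" unfolding lm_def L_def by (rule hermitian_form_real[OF herm])
  define w where "w = A *v x0 - lm *s x0"
  have wW: "w \<in> W" unfolding w_def by (intro vec.subspace_diff vec.subspace_scale W AW x0)
  have c00: "cinner x0 x0 = 1" using x0 by (simp add: cinner_self_norm_1)
  have cx0w: "cinner x0 w = 0" unfolding w_def
    by (simp add: cinner_diff_right cinner_scale_right c00 lm_def)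
  have cwx0: "cinner w x0 = 0" using cx0w cnj_cinner by (metis complex_cnj_zero)
  have Ax0: "A *v x0 = w + lm *s x0" unfolding w_def by simp
  define N where "N = (norm w)\<^sup>2"
  define R where "R = Re (cinner w (A *v w))"
  have cww: "cinner w w = of_real N" unfolding N_def by (rule cinner_self)
  have c1: "cinner w (A *v x0) = of_real N" unfolding Ax0
    by (simp add: cinner_add_right cinner_scale_right cww cwx0)
  have c2: "cinner x0 (A *v w) = of_real N"
    unfolding hermitian_cinner[OF herm] Ax0 by (simp add: cinner_add_left cinner_scale_left cww cx0w)
  \<comment> \<open>Perturbing x0 in the direction w would increase the Rayleigh quotient at first order.\<close>
  have "2 * N \<le> 0"
  proof (rule nonpos_if_linear_le_quadratic[where b = "L * N - R"])
    fix t :: real assume t: "t > 0"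
    define y where "y = x0 + t *\<^sub>R w"
    have "y \<in> W" unfolding y_def scaleR_eq_of_real_scale
      by (intro vec.subspace_add vec.subspace_scale W x0 wW)
    hence bound: "Re (cinner y (A *v y)) \<le> L * (norm y)\<^sup>2" unfolding L_def by (rule max)
    have "cinner y y = 1 + of_real (t\<^sup>2 * N)" unfolding y_def
      by (simp add: cinner_add_left cinner_add_right cinner_scaleR_left cinner_scaleR_right
          c00 cx0w cwx0 cww power2_eq_square)
    hence ny: "(norm y)\<^sup>2 = 1 + t\<^sup>2 * N" unfolding cinner_self
      by (metis of_real_1 of_real_add of_real_eq_iff)
    have "cinner y (A *v y) = lm + of_real (2 * t * N) + of_real (t\<^sup>2) * cinner w (A *v w)"
      unfolding y_def
      by (simp add: matrix_vector_mult_complex_scaleR cinner_add_left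
          cinner_add_right cinner_scaleR_left cinner_scaleR_right c1 c2 lm_def power2_eq_square
          algebra_simps)
    hence "Re (cinner y (A *v y)) = L + 2 * t * N + t\<^sup>2 * R" unfolding R_def lm by simp
    with bound ny show "t * (2 * N) \<le> t\<^sup>2 * (L * N - R)" by (simp add: algebra_simps)
  qed
  hence "w = 0" unfolding N_def by simp
  thus ?thesis unfolding w_def lm_def by simp
qed

lemma rayleigh_maximizer_exists:
  fixes A :: "complex^'n^'n"
  assumes W: "vec.subspace W" and "closed W" and "z \<in> W" and "norm z = 1"
  obtains x0 where "x0 \<in> W" and "norm x0 = 1"
    and "\<And>y. y \<in> W \<Longrightarrow> Re (cinner y (A *v y)) \<le> Re (cinner x0 (A *v x0)) * (norm y)\<^sup>2"
proof -
  define f where "f = (\<lambda>x::complex^'n. Re (cinner x (A *v x)))"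
  have "compact (W \<inter> sphere 0 1)" using \<open>closed W\<close> by (intro closed_Int_compact compact_sphere)
  moreover have "W \<inter> sphere 0 1 \<noteq> {}" using assms by auto
  moreover have "continuous_on (W \<inter> sphere 0 1) f"
    unfolding f_def cinner_def matrix_vector_mult_def by (intro continuous_intros)
  ultimately obtain x0 where x0: "x0 \<in> W" "norm x0 = 1"
    and max: "\<And>y. y \<in> W \<inter> sphere 0 1 \<Longrightarrow> f y \<le> f x0"
    using continuous_attains_sup by (metis IntD1 IntD2 mem_sphere_0)
  have "f y \<le> f x0 * (norm y)\<^sup>2" if y: "y \<in> W" for y
  proof (cases "y = 0")
    case True
    thus ?thesis unfolding f_def by simp
  next
    case False
    define y' where "y' = (1 / norm y) *\<^sub>R y"
    have "y' \<in> W" unfolding y'_def scaleR_eq_of_real_scale by (intro vec.subspace_scale W y)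
    hence "f y' \<le> f x0" using False by (intro max) (simp add: y'_def)
    moreover have "f y' = f y / (norm y)\<^sup>2"
      unfolding f_def y'_def
      by (simp add: matrix_vector_mult_complex_scaleR cinner_scaleR_left cinner_scaleR_right
          power2_eq_square)
    ultimately show ?thesis using False by (simp add: divide_le_eq mult.commute)
  qed
  with x0 that show ?thesis unfolding f_def by blast
qed

lemma eigenvector_orthogonal_to:
  fixes v :: "'i \<Rightarrow> complex^'n"
  assumes herm: "hermitian A" and fin: "finite S" and card: "card S < CARD('n)"
    and on: "orthonormal_on v S" and ev: "eigenvectors_on A v S"
  shows "\<exists>z. norm z = 1 \<and> (\<forall>i\<in>S. cinner (v i) z = 0) \<and> A *v z = cinner z (A *v z) *s z"
proof -
  define W where "W = {x. \<forall>i\<in>S. cinner (v i) x = 0}"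
  have W: "vec.subspace W"
    unfolding W_def vec.subspace_def by (simp add: cinner_add_right cinner_scale_right)
  have W_Inter: "W = (\<Inter>i\<in>S. {x. cinner (v i) x = 0})" unfolding W_def by auto
  have "closed W"
    unfolding W_Inter cinner_def by (intro closed_INT ballI closed_Collect_eq continuous_intros)
  have AW: "A *v x \<in> W" if "x \<in> W" for x
  proof -
    have "cinner (v i) (A *v x) = cinner (cinner (v i) (A *v v i) *s v i) x" if "i \<in> S" for i
      using ev that unfolding hermitian_cinner[OF herm] eigenvectors_on_def by metis
    thus ?thesis using \<open>x \<in> W\<close> unfolding W_def by (simp add: cinner_scale_left)
  qed
  obtain z where "z \<in> W" "norm z = 1"
    using unit_vector_orthogonal_to[OF fin card on] unfolding W_def by blast
  then obtain x0 where x0: "x0 \<in> W" "norm x0 = 1"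
    and "\<And>y. y \<in> W \<Longrightarrow> Re (cinner y (A *v y)) \<le> Re (cinner x0 (A *v x0)) * (norm y)\<^sup>2"
    using rayleigh_maximizer_exists[where A = A, OF W \<open>closed W\<close>] by blast
  hence "A *v x0 = cinner x0 (A *v x0) *s x0"
    by (intro rayleigh_maximizer_is_eigenvector[OF herm W AW x0])
  thus ?thesis using x0 unfolding W_def by blast
qed

lemma orthonormal_eigenvectors_exist:
  fixes A :: "complex^'n^'n" and S :: "'n set"
  assumes herm: "hermitian A"
  shows "\<exists>v. orthonormal_on v S \<and> eigenvectors_on A v S"
  using finite[of S]
proof (induction S rule: finite_induct)
  case empty
  show ?case unfolding orthonormal_on_def eigenvectors_on_def by auto
next
  case (insert x S)
  then obtain v where on: "orthonormal_on v S" and ev: "eigenvectors_on A v S" by blast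
  have "card S < card (insert x S)" using insert by simp
  also have "\<dots> \<le> CARD('n)" by (rule card_mono) auto
  finally obtain z where z: "norm z = 1" "\<forall>i\<in>S. cinner (v i) z = 0"
    "A *v z = cinner z (A *v z) *s z"
    using eigenvector_orthogonal_to[OF herm insert(1) _ on ev] by blast
  have "orthonormal_on (v(x := z)) (insert x S)"
    unfolding orthonormal_on_def
  proof (intro ballI)
    fix i j assume i: "i \<in> insert x S" and j: "j \<in> insert x S"
    have zv: "cinner z (v k) = 0" if "k \<in> S" for k
      using z(2) that cnj_cinner[of z "v k"] by simp
    show "cinner ((v(x := z)) i) ((v(x := z)) j) = (if i = j then 1 else 0)"
      using i j on z(2) zv insert(2) cinner_self_norm_1[OF z(1)]
      unfolding orthonormal_on_def by (cases "i = x"; cases "j = x") auto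
  qed
  moreover have "eigenvectors_on A (v(x := z)) (insert x S)"
    using ev z insert(2) unfolding eigenvectors_on_def by auto
  ultimately show ?case by blast
qed

section \<open>Unitary diagonalization\<close>

definition basis_mat :: "('n \<Rightarrow> complex^'n) \<Rightarrow> complex^'n^'n" where
  "basis_mat v = (\<chi> r c. v c $ r)"

definition diag_mat :: "('n \<Rightarrow> complex) \<Rightarrow> complex^'n^'n" where
  "diag_mat e = (\<chi> i j. if i = j then e i else 0)"

lemma cnj_transpose_cnj_transpose [simp]: "cnj_transpose (cnj_transpose A) = A"
  unfolding cnj_transpose_def by (simp add: vec_eq_iff)

lemma cnj_transpose_mult: "cnj_transpose (A ** B) = cnj_transpose B ** cnj_transpose A"
  unfolding cnj_transpose_def matrix_matrix_mult_def
  by (simp add: vec_eq_iff mult.commute)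

lemma cnj_transpose_diff: "cnj_transpose (A - B) = cnj_transpose A - cnj_transpose B"
  unfolding cnj_transpose_def by (simp add: vec_eq_iff)

lemma cnj_transpose_diag_mat: "cnj_transpose (diag_mat e) = diag_mat (\<lambda>i. cnj (e i))"
  unfolding cnj_transpose_def diag_mat_def by (simp add: vec_eq_iff)

lemma diag_mat_mult: "diag_mat a ** diag_mat b = diag_mat (\<lambda>i. a i * b i)"
proof -
  have "(\<Sum>k\<in>UNIV. (if i = k then a i else 0) * (if k = j then b k else 0))
      = (\<Sum>k\<in>UNIV. if k = i then (if i = j then a i * b i else 0) else 0)" for i j
    by (intro sum.cong refl) auto
  thus ?thesis unfolding diag_mat_def matrix_matrix_mult_def by (simp add: vec_eq_iff)
qed

lemma matrix_vector_mult_diag_mat: "(diag_mat e *v y) $ i = e i * y $ i"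
proof -
  have "(\<Sum>j\<in>UNIV. (if i = j then e i else 0) * y $ j) = (\<Sum>j\<in>UNIV. if j = i then e i * y $ i else 0)"
    by (intro sum.cong refl) auto
  thus ?thesis unfolding diag_mat_def matrix_vector_mult_def by simp
qed

lemma basis_mat_adjoint_mult:
  "(cnj_transpose (basis_mat v) ** B ** basis_mat v) $ k $ l = cinner (v k) (B *v v l)"
proof -
  have "(cnj_transpose (basis_mat v) ** B ** basis_mat v) $ k $ l
        = (\<Sum>r\<in>UNIV. \<Sum>s\<in>UNIV. cnj (v k $ s) * B $ s $ r * v l $ r)"
    unfolding matrix_matrix_mult_def cnj_transpose_def basis_mat_def by (simp add: sum_distrib_right)
  also have "\<dots> = cinner (v k) (B *v v l)"
    unfolding cinner_form[symmetric] by (rule sum.swap)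
  finally show ?thesis .
qed

lemma basis_mat_unitary:
  assumes "orthonormal_on v UNIV"
  shows "cnj_transpose (basis_mat v) ** basis_mat v = mat 1"
    and "basis_mat v ** cnj_transpose (basis_mat v) = mat 1"
proof -
  have "cinner (v i) (mat 1 *v v j) = mat 1 $ i $ j" for i j
    unfolding matrix_vector_mul_lid using assms unfolding orthonormal_on_def by (simp add: mat_def)
  thus 1: "cnj_transpose (basis_mat v) ** basis_mat v = mat 1"
    using basis_mat_adjoint_mult[of v "mat 1"] by (simp add: vec_eq_iff)
  show "basis_mat v ** cnj_transpose (basis_mat v) = mat 1"
    by (rule matrix_left_right_inverse[THEN iffD2, OF 1])
qed

lemma spectral_decomposition:
  fixes A :: "complex^'n^'n"
  assumes "hermitian A"
  obtains v where "orthonormal_on v UNIV" and "eigenvectors_on A v UNIV"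
    and "A = basis_mat v ** diag_mat (\<lambda>k. cinner (v k) (A *v v k)) ** cnj_transpose (basis_mat v)"
proof -
  obtain v :: "'n \<Rightarrow> complex^'n" where on: "orthonormal_on v UNIV" and ev: "eigenvectors_on A v UNIV"
    using orthonormal_eigenvectors_exist[OF assms] by blast
  have "(A ** basis_mat v) $ r $ c = (basis_mat v ** diag_mat e) $ r $ c"
    if "e = (\<lambda>k. cinner (v k) (A *v v k))" for r c e
  proof -
    have "(A ** basis_mat v) $ r $ c = (A *v v c) $ r"
      unfolding matrix_matrix_mult_def matrix_vector_mult_def basis_mat_def by simp
    also have "\<dots> = e c * v c $ r"
      using ev that unfolding eigenvectors_on_def by (metis UNIV_I vector_smult_component)
    also have "\<dots> = (basis_mat v ** diag_mat e) $ r $ c"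
      unfolding matrix_matrix_mult_def diag_mat_def basis_mat_def
      by (simp add: if_distrib[of "times _"] mult.commute cong: if_cong)
    finally show ?thesis .
  qed
  hence "A ** basis_mat v = basis_mat v ** diag_mat (\<lambda>k. cinner (v k) (A *v v k))"
    by (simp add: vec_eq_iff)
  hence "A = basis_mat v ** diag_mat (\<lambda>k. cinner (v k) (A *v v k)) ** cnj_transpose (basis_mat v)"
    using basis_mat_unitary(2)[OF on] by (metis matrix_mul_assoc matrix_mul_rid)
  with on ev that show ?thesis by blast
qed

lemma diagonalized_mult:
  assumes "orthonormal_on v UNIV"
  shows "(basis_mat v ** diag_mat a ** cnj_transpose (basis_mat v))
           ** (basis_mat v ** diag_mat b ** cnj_transpose (basis_mat v))
       = basis_mat v ** diag_mat (\<lambda>i. a i * b i) ** cnj_transpose (basis_mat v)"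
proof -
  have "(basis_mat v ** diag_mat a ** cnj_transpose (basis_mat v))
          ** (basis_mat v ** diag_mat b ** cnj_transpose (basis_mat v))
      = basis_mat v ** diag_mat a ** (cnj_transpose (basis_mat v) ** basis_mat v)
          ** diag_mat b ** cnj_transpose (basis_mat v)"
    by (simp add: matrix_mul_assoc)
  also have "\<dots> = basis_mat v ** (diag_mat a ** diag_mat b) ** cnj_transpose (basis_mat v)"
    by (simp add: basis_mat_unitary(1)[OF assms] matrix_mul_assoc)
  finally show ?thesis by (simp add: diag_mat_mult)
qed

lemma diagonalized_form:
  "cinner x ((basis_mat v ** diag_mat e ** cnj_transpose (basis_mat v)) *v x)
     = (\<Sum>i\<in>UNIV. e i * of_real ((cmod ((cnj_transpose (basis_mat v) *v x) $ i))\<^sup>2))"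
proof -
  define y where "y = cnj_transpose (basis_mat v) *v x"
  have "cinner x ((basis_mat v ** diag_mat e ** cnj_transpose (basis_mat v)) *v x)
      = cinner x (basis_mat v *v (diag_mat e *v y))"
    unfolding y_def by (simp add: matrix_vector_mul_assoc matrix_mul_assoc)
  also have "\<dots> = cinner y (diag_mat e *v y)"
    unfolding cinner_mat_right y_def ..
  also have "\<dots> = (\<Sum>i\<in>UNIV. e i * (cnj (y $ i) * y $ i))"
    unfolding cinner_def matrix_vector_mult_diag_mat by (simp add: mult_ac)
  also have "\<dots> = (\<Sum>i\<in>UNIV. e i * of_real ((cmod (y $ i))\<^sup>2))"
    by (intro sum.cong refl) (metis complex_norm_square mult.commute)
  finally show ?thesis unfolding y_def .
qed

lemma psd_diagonalized:
  assumes "\<And>k. 0 \<le> r k"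
  shows "psd (basis_mat v ** diag_mat (\<lambda>k. of_real (r k)) ** cnj_transpose (basis_mat v))"
  unfolding psd_iff hermitian_def diagonalized_form
  by (auto simp: cnj_transpose_mult cnj_transpose_diag_mat matrix_mul_assoc assms
      intro!: sum_nonneg)

lemma trace_diagonalized:
  assumes "orthonormal_on v UNIV"
  shows "trace (basis_mat v ** diag_mat e ** cnj_transpose (basis_mat v)) = (\<Sum>k\<in>UNIV. e k)"
proof -
  have "trace (basis_mat v ** diag_mat e ** cnj_transpose (basis_mat v))
      = trace (basis_mat v ** (diag_mat e ** cnj_transpose (basis_mat v)))"
    by (simp add: matrix_mul_assoc)
  also have "\<dots> = trace ((diag_mat e ** cnj_transpose (basis_mat v)) ** basis_mat v)"
    by (rule trace_mul_sym)
  also have "\<dots> = trace (diag_mat e)"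
    by (simp add: basis_mat_unitary(1)[OF assms] flip: matrix_mul_assoc)
  finally show ?thesis unfolding trace_def diag_mat_def by simp
qed

lemma trace_eq_sum_cinner:
  fixes v :: "'n \<Rightarrow> complex^'n"
  assumes "orthonormal_on v UNIV"
  shows "trace X = (\<Sum>k\<in>UNIV. cinner (v k) (X *v v k))"
proof -
  have "trace (cnj_transpose (basis_mat v) ** X ** basis_mat v)
      = trace (basis_mat v ** (cnj_transpose (basis_mat v) ** X))"
    by (rule trace_mul_sym)
  also have "\<dots> = trace X" by (simp add: basis_mat_unitary(2)[OF assms] matrix_mul_assoc)
  finally show ?thesis
    unfolding trace_def[of "cnj_transpose (basis_mat v) ** X ** basis_mat v"] basis_mat_adjoint_mult
    by simp
qed

section \<open>Square roots and the trace norm\<close>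

lemma psd_form_zero_imp_kernel:
  assumes psd: "psd Y" and zero: "Re (cinner x (Y *v x)) = 0"
  shows "Y *v x = 0"
proof -
  have herm: "hermitian Y" and pos: "\<And>z. 0 \<le> Re (cinner z (Y *v z))" using psd psd_iff by auto
  define u where "u = Y *v x"
  define N where "N = (norm u)\<^sup>2"
  have cuu: "cinner u u = of_real N" unfolding N_def by (rule cinner_self)
  have c1: "cinner x (Y *v u) = of_real N" unfolding hermitian_cinner[OF herm] u_def[symmetric] cuu ..
  have c2: "cinner u (Y *v x) = of_real N" unfolding u_def[symmetric] cuu ..
  \<comment> \<open>Positivity of the form at x - t u, for small t > 0.\<close>
  have "2 * N \<le> 0"
  proof (rule nonpos_if_linear_le_quadratic[where b = "Re (cinner u (Y *v u))"])
    fix t :: real assume t: "t > 0"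
    have "0 \<le> Re (cinner (x - t *\<^sub>R u) (Y *v (x - t *\<^sub>R u)))" by (rule pos)
    also have "cinner (x - t *\<^sub>R u) (Y *v (x - t *\<^sub>R u))
        = cinner x (Y *v x) - of_real (2 * t * N) + of_real (t\<^sup>2) * cinner u (Y *v u)"
      by (simp add: matrix_vector_mult_complex_scaleR
          cinner_diff_left cinner_diff_right cinner_scaleR_left cinner_scaleR_right c1 c2
          power2_eq_square algebra_simps)
    finally show "t * (2 * N) \<le> t\<^sup>2 * Re (cinner u (Y *v u))"
      using zero by (simp add: algebra_simps)
  qed
  thus ?thesis unfolding N_def u_def by simp
qed

lemma matrix_mult_diff_left: "(A::complex^'n^'n) ** (B - C) = A ** B - A ** C"
  unfolding matrix_matrix_mult_def by (simp add: vec_eq_iff sum_subtractf right_diff_distrib)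

lemma matrix_mult_diff_right: "((A::complex^'n^'n) - B) ** C = A ** C - B ** C"
  unfolding matrix_matrix_mult_def by (simp add: vec_eq_iff sum_subtractf left_diff_distrib)

text \<open>With D = Y - Z one has Y D + D Z = Y Y - Z Z = 0; on an eigenvector x of D with (real)
  eigenvalue e this gives e (\<langle>x, Y x\<rangle> + \<langle>x, Z x\<rangle>) = 0, and for e \<noteq> 0 positivity forces
  Y x = Z x = 0.\<close>
lemma psd_sqrt_difference_eigenvector:
  fixes Y Z :: "complex^'n^'n"
  assumes pY: "psd Y" and pZ: "psd Z" and eq: "Y ** Y = Z ** Z"
    and eig: "(Y - Z) *v x = e *s x" and e_real: "cnj e = e"
  shows "(Y - Z) *v x = 0"
proof (cases "e = 0")
  case True
  with eig show ?thesis by simp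
next
  case False
  define D where "D = Y - Z"
  have hD: "hermitian D"
    using pY pZ unfolding D_def psd_iff hermitian_def by (simp add: cnj_transpose_diff)
  have "Y ** D + D ** Z = 0"
    unfolding D_def using eq by (simp add: matrix_mult_diff_left matrix_mult_diff_right matrix_mul_assoc)
  hence "0 = cinner x ((Y ** D + D ** Z) *v x)" by simp
  also have "\<dots> = cinner x (Y *v (D *v x)) + cinner (D *v x) (Z *v x)"
    by (simp add: matrix_vector_mult_add_rdistrib cinner_add_right hermitian_cinner[OF hD]
        flip: matrix_vector_mul_assoc)
  also have "\<dots> = e * (cinner x (Y *v x) + cinner x (Z *v x))"
    using eig e_real unfolding D_def[symmetric]
    by (simp add: vector_scalar_commute cinner_scale_right cinner_scale_left algebra_simps)
  finally have "cinner x (Y *v x) + cinner x (Z *v x) = 0" using False by simp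
  hence "Re (cinner x (Y *v x)) + Re (cinner x (Z *v x)) = 0"
    by (metis plus_complex.simps(1) zero_complex.simps(1))
  moreover have "0 \<le> Re (cinner x (Y *v x))" "0 \<le> Re (cinner x (Z *v x))"
    using pY pZ psd_iff by auto
  ultimately have "Re (cinner x (Y *v x)) = 0" "Re (cinner x (Z *v x)) = 0"
    by linarith+
  hence "Y *v x = 0" "Z *v x = 0"
    using psd_form_zero_imp_kernel pY pZ by auto
  thus ?thesis by (simp add: matrix_vector_mult_diff_rdistrib)
qed

lemma psd_sqrt_unique:
  fixes Y Z :: "complex^'n^'n"
  assumes pY: "psd Y" and pZ: "psd Z" and eq: "Y ** Y = Z ** Z"
  shows "Y = Z"
proof -
  have hD: "hermitian (Y - Z)"
    using pY pZ unfolding psd_iff hermitian_def by (simp add: cnj_transpose_diff)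
  obtain v :: "'n \<Rightarrow> complex^'n" where ev: "eigenvectors_on (Y - Z) v UNIV"
    and dec: "Y - Z = basis_mat v ** diag_mat (\<lambda>k. cinner (v k) ((Y - Z) *v v k))
                        ** cnj_transpose (basis_mat v)"
    by (rule spectral_decomposition[OF hD])
  have "(Y - Z) *v v k = 0" for k
    using ev hermitian_form_real[OF hD, of "v k"]
    unfolding eigenvectors_on_def
    by (intro psd_sqrt_difference_eigenvector[OF pY pZ eq]) (auto, metis complex_cnj_complex_of_real)
  hence "cinner (v k) ((Y - Z) *v v k) = 0" for k by simp
  hence "diag_mat (\<lambda>k. cinner (v k) ((Y - Z) *v v k)) = 0" unfolding diag_mat_def by (simp add: vec_eq_iff)
  hence "Y - Z = 0" using dec by simp
  thus ?thesis by simp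
qed

lemma mat_sqrt_eq:
  assumes "psd Y" "Y ** Y = M"
  shows "mat_sqrt M = Y"
  unfolding mat_sqrt_def by (rule the_equality) (use assms psd_sqrt_unique in auto)

definition frob_sq :: "complex^'n^'m \<Rightarrow> real" where
  "frob_sq X = (\<Sum>k\<in>UNIV. \<Sum>l\<in>UNIV. (cmod (X $ k $ l))\<^sup>2)"

lemma trace_adjoint_mult_self: "trace (cnj_transpose X ** X) = of_real (frob_sq X)"
proof -
  have "trace (cnj_transpose X ** X) = (\<Sum>l\<in>UNIV. \<Sum>k\<in>UNIV. cnj (X $ k $ l) * X $ k $ l)"
    unfolding trace_def matrix_matrix_mult_def cnj_transpose_def by simp
  also have "\<dots> = (\<Sum>l\<in>UNIV. \<Sum>k\<in>UNIV. of_real ((cmod (X $ k $ l))\<^sup>2))"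
    by (intro sum.cong refl) (metis complex_norm_square mult.commute)
  also have "\<dots> = of_real (frob_sq X)" unfolding frob_sq_def of_real_sum by (rule sum.swap)
  finally show ?thesis .
qed

text \<open>The singular values of X are the norms of X v k for an eigenbasis v of M = X^* X:
  the diagonal matrix of these norms, in the basis v, is the positive square root of M.\<close>
lemma singular_value_basis:
  fixes X :: "complex^'n^'n"
  obtains v :: "'n \<Rightarrow> complex^'n" where "orthonormal_on v UNIV"
    and "trace_norm X = (\<Sum>k\<in>UNIV. norm (X *v v k))"
    and "frob_sq X = (\<Sum>k\<in>UNIV. (norm (X *v v k))\<^sup>2)"
proof -
  define M where "M = cnj_transpose X ** X"
  have form: "cinner x (M *v x) = cinner (X *v x) (X *v x)" for x
    unfolding M_def by (simp flip: matrix_vector_mul_assoc add: cinner_mat_right)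
  have hM: "hermitian M" unfolding M_def hermitian_def by (simp add: cnj_transpose_mult)
  obtain v :: "'n \<Rightarrow> complex^'n" where on: "orthonormal_on v UNIV"
    and dec: "M = basis_mat v ** diag_mat (\<lambda>k. cinner (v k) (M *v v k)) ** cnj_transpose (basis_mat v)"
    by (rule spectral_decomposition[OF hM])
  define n where "n k = norm (X *v v k)" for k
  have eig: "cinner (v k) (M *v v k) = of_real (n k) * of_real (n k)" for k
    unfolding form n_def cinner_self by (simp add: power2_eq_square)
  define S where "S = basis_mat v ** diag_mat (\<lambda>k. of_real (n k)) ** cnj_transpose (basis_mat v)"
  have "psd S" unfolding S_def by (rule psd_diagonalized) (simp add: n_def)
  moreover have "S ** S = M" unfolding S_def diagonalized_mult[OF on] using dec eig by simp
  ultimately have "trace_norm X = (\<Sum>k\<in>UNIV. n k)"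
    unfolding trace_norm_def M_def[symmetric] by (simp add: mat_sqrt_eq S_def trace_diagonalized[OF on])
  moreover have "frob_sq X = (\<Sum>k\<in>UNIV. (n k)\<^sup>2)"
  proof -
    have "of_real (frob_sq X) = trace M" unfolding M_def trace_adjoint_mult_self ..
    also have "\<dots> = of_real (\<Sum>k\<in>UNIV. (n k)\<^sup>2)"
      by (subst dec) (simp add: trace_diagonalized[OF on] eig power2_eq_square)
    finally show ?thesis by (simp only: of_real_eq_iff)
  qed
  ultimately show ?thesis using that on unfolding n_def by blast
qed

lemma norm_trace_le_trace_norm: "cmod (trace X) \<le> trace_norm (X::complex^'n^'n)"
proof -
  obtain v :: "'n \<Rightarrow> complex^'n" where on: "orthonormal_on v UNIV"
    and tn: "trace_norm X = (\<Sum>k\<in>UNIV. norm (X *v v k))"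
    by (rule singular_value_basis)
  have "cmod (trace X) \<le> (\<Sum>k\<in>UNIV. cmod (cinner (v k) (X *v v k)))"
    unfolding trace_eq_sum_cinner[OF on] by (rule norm_sum)
  also have "\<dots> \<le> (\<Sum>k\<in>UNIV. norm (X *v v k))"
    using norm_cinner_le[of "v _"] orthonormal_on_norm[OF on] by (intro sum_mono) simp
  finally show ?thesis unfolding tn .
qed

lemma sum_squares_le_square_sum:
  fixes a :: "'i \<Rightarrow> real"
  assumes "\<And>i. i \<in> S \<Longrightarrow> 0 \<le> a i"
  shows "(\<Sum>i\<in>S. (a i)\<^sup>2) \<le> (\<Sum>i\<in>S. a i)\<^sup>2"
proof (cases "finite S")
  case True
  have "(\<Sum>i\<in>S. a i * a i) \<le> (\<Sum>i\<in>S. \<Sum>j\<in>S. a i * a j)"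
    using True assms by (intro sum_mono member_le_sum[where f = "\<lambda>j. a _ * a j"]) auto
  thus ?thesis by (simp add: power2_eq_square sum_product)
qed simp

lemma frob_sq_le_trace_norm_sq: "frob_sq X \<le> (trace_norm (X::complex^'n^'n))\<^sup>2"
proof -
  obtain v :: "'n \<Rightarrow> complex^'n" where "trace_norm X = (\<Sum>k\<in>UNIV. norm (X *v v k))"
    and "frob_sq X = (\<Sum>k\<in>UNIV. (norm (X *v v k))\<^sup>2)"
    by (rule singular_value_basis)
  thus ?thesis by (simp add: sum_squares_le_square_sum)
qed

lemma psd_trace_norm:
  assumes "psd X"
  shows "trace_norm X = cmod (trace X)"
proof -
  have "mat_sqrt (cnj_transpose X ** X) = X"
    using mat_sqrt_eq[OF assms refl] assms unfolding psd_def by simp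
  hence "trace_norm X = Re (trace X)" unfolding trace_norm_def by simp
  thus ?thesis using complex_Re_le_cmod[of "trace X"] norm_trace_le_trace_norm[of X] by linarith
qed

section \<open>Blocks of a bipartite operator\<close>

lemma sum_UNIV_prod: "(\<Sum>p\<in>UNIV. g p) = (\<Sum>a\<in>UNIV. \<Sum>b\<in>UNIV. g (a, b))"
  for g :: "'a::finite \<times> 'b::finite \<Rightarrow> 'c::comm_monoid_add"
  by (simp add: sum.cartesian_product)

lemma trace_sq_hermitian: "hermitian A \<Longrightarrow> Re (trace (A ** A)) = frob_sq A"
  using trace_adjoint_mult_self[of A] unfolding hermitian_def by simp

lemma ptrace_B_eq_trace_block_B: "ptrace_B \<rho> $ i $ j = trace (block_B \<rho> i j)"
  unfolding ptrace_B_def block_B_def trace_def by simp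

lemma hermitian_ptrace_B: "hermitian \<rho> \<Longrightarrow> hermitian (ptrace_B \<rho>)"
  unfolding hermitian_def cnj_transpose_def ptrace_B_def
  by (simp add: vec_eq_iff)

lemma frob_sq_block_B_swap:
  assumes "hermitian \<rho>"
  shows "frob_sq (block_B \<rho> j i) = frob_sq (block_B \<rho> i j)"
proof -
  have "cmod (\<rho> $ (j, k) $ (i, l)) = cmod (\<rho> $ (i, l) $ (j, k))" for k l
    using hermitian_entry[OF assms, of "(i, l)" "(j, k)"] by (metis complex_mod_cnj)
  hence "frob_sq (block_B \<rho> j i) = (\<Sum>k\<in>UNIV. \<Sum>l\<in>UNIV. (cmod (\<rho> $ (i, l) $ (j, k)))\<^sup>2)"
    unfolding frob_sq_def block_B_def by simp
  also have "\<dots> = (\<Sum>l\<in>UNIV. \<Sum>k\<in>UNIV. (cmod (\<rho> $ (i, l) $ (j, k)))\<^sup>2)"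
    by (rule sum.swap)
  also have "\<dots> = frob_sq (block_B \<rho> i j)"
    unfolding frob_sq_def block_B_def by simp
  finally show ?thesis .
qed

lemma frob_sq_eq_sum_blocks: "frob_sq \<rho> = (\<Sum>i\<in>UNIV. \<Sum>j\<in>UNIV. frob_sq (block_B \<rho> i j))"
proof -
  have "frob_sq \<rho> = (\<Sum>i\<in>UNIV. \<Sum>k\<in>UNIV. \<Sum>j\<in>UNIV. \<Sum>l\<in>UNIV. (cmod (\<rho> $ (i, k) $ (j, l)))\<^sup>2)"
    unfolding frob_sq_def by (simp only: sum_UNIV_prod)
  also have "\<dots> = (\<Sum>i\<in>UNIV. \<Sum>j\<in>UNIV. \<Sum>k\<in>UNIV. \<Sum>l\<in>UNIV. (cmod (\<rho> $ (i, k) $ (j, l)))\<^sup>2)"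
    by (intro sum.cong refl sum.swap)
  finally show ?thesis unfolding frob_sq_def block_B_def by simp
qed

lemma sum_UNIV_prod_delta_fst:
  "(\<Sum>p\<in>UNIV. if fst p = i then g (snd p) else 0) = (\<Sum>k\<in>UNIV. g k)"
  for i :: "'a::finite" and g :: "'b::finite \<Rightarrow> 'c::comm_monoid_add"
proof -
  have "(\<Sum>p\<in>UNIV. if fst p = i then g (snd p) else 0)
      = (\<Sum>a\<in>UNIV. if a = i then (\<Sum>b\<in>UNIV. g b) else 0)"
    unfolding sum_UNIV_prod by (intro sum.cong refl) auto
  thus ?thesis by simp
qed

lemma psd_block_B_diag:
  assumes psd: "psd \<rho>"
  shows "psd (block_B \<rho> i i)"
  unfolding psd_iff
proof
  have "cnj_transpose \<rho> = \<rho>" using psd unfolding psd_def by blast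
  thus "hermitian (block_B \<rho> i i)"
    unfolding hermitian_def cnj_transpose_def block_B_def by (simp add: vec_eq_iff)
  show "\<forall>x. 0 \<le> Re (cinner x (block_B \<rho> i i *v x))"
  proof
    fix x :: "complex^'b"
    define y :: "complex^('a \<times> 'b)" where "y = (\<chi> p. if fst p = i then x $ snd p else 0)"
    have "cinner y (\<rho> *v y) = (\<Sum>p\<in>UNIV. if fst p = i then (\<Sum>q\<in>UNIV. if fst q = i then
              cnj (x $ snd p) * \<rho> $ (i, snd p) $ (i, snd q) * x $ snd q else 0) else 0)"
      unfolding cinner_form[symmetric] y_def by (intro sum.cong refl) (auto intro!: sum.cong)
    also have "\<dots> = (\<Sum>k\<in>UNIV. \<Sum>q\<in>UNIV. if fst q = i then
              cnj (x $ k) * \<rho> $ (i, k) $ (i, snd q) * x $ snd q else 0)"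
      by (rule sum_UNIV_prod_delta_fst[where g = "\<lambda>k. \<Sum>q\<in>UNIV. if fst q = i then
              cnj (x $ k) * \<rho> $ (i, k) $ (i, snd q) * x $ snd q else 0"])
    also have "\<dots> = (\<Sum>k\<in>UNIV. \<Sum>l\<in>UNIV. cnj (x $ k) * \<rho> $ (i, k) $ (i, l) * x $ l)"
      by (intro sum.cong refl sum_UNIV_prod_delta_fst)
    also have "\<dots> = cinner x (block_B \<rho> i i *v x)"
      unfolding cinner_form[symmetric] block_B_def by simp
    finally show "0 \<le> Re (cinner x (block_B \<rho> i i *v x))"
      using psd unfolding psd_iff by metis
  qed
qed

section \<open>The coherence inequality\<close>

lemma le_mult_if_le_squares:
  fixes a b x :: real
  assumes "x \<le> a\<^sup>2" and "x \<le> b\<^sup>2" and "0 \<le> a" and "0 \<le> b"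
  shows "x \<le> a * b"
proof (cases "a \<le> b")
  case True
  hence "a * a \<le> a * b" using \<open>0 \<le> a\<close> by (rule mult_left_mono)
  thus ?thesis using assms(1) by (simp add: power2_eq_square)
next
  case False
  hence "b * b \<le> a * b" using \<open>0 \<le> b\<close> by (intro mult_right_mono) auto
  thus ?thesis using assms(2) by (simp add: power2_eq_square)
qed

text \<open>Expanding the difference of the squared off-diagonal sums gives a double sum over pairs
  p, q of off-diagonal positions of the nonnegative terms t p t q - c p c q.  For each p = (i, j)
  the terms q = (i, j) and q = (j, i) alone already dominate 2 (f i j - c i j ^ 2), while the
  diagonal contributes f i i - c i i ^ 2 \<le> 0.\<close>
lemma off_diagonal_square_difference_ge:
  fixes t c f :: "'a::finite \<Rightarrow> 'a \<Rightarrow> real"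
  assumes c_le_t: "\<And>i j. c i j \<le> t i j" and c_nonneg: "\<And>i j. 0 \<le> c i j"
    and f_le_t: "\<And>i j. f i j \<le> (t i j)\<^sup>2" and f_diag: "\<And>i. f i i \<le> (c i i)\<^sup>2"
    and f_sym: "\<And>i j. f j i = f i j" and c_sym: "\<And>i j. c j i = c i j"
  shows "2 * ((\<Sum>i\<in>UNIV. \<Sum>j\<in>UNIV. f i j) - (\<Sum>i\<in>UNIV. \<Sum>j\<in>UNIV. (c i j)\<^sup>2))
     \<le> (\<Sum>i\<in>UNIV. \<Sum>j\<in>UNIV - {i}. t i j)\<^sup>2 - (\<Sum>i\<in>UNIV. \<Sum>j\<in>UNIV - {i}. c i j)\<^sup>2"
proof -
  define P where "P = {p :: 'a \<times> 'a. fst p \<noteq> snd p}"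
  have P_Sigma: "Sigma UNIV (\<lambda>i. UNIV - {i}) = P" unfolding P_def by auto
  have off_diagonal: "(\<Sum>i\<in>UNIV. \<Sum>j\<in>UNIV - {i}. g i j) = (\<Sum>p\<in>P. g (fst p) (snd p))"
    for g :: "'a \<Rightarrow> 'a \<Rightarrow> real"
    by (subst sum.Sigma) (auto simp: P_Sigma case_prod_beta)
  define G where "G p q = t (fst p) (snd p) * t (fst q) (snd q) - c (fst p) (snd p) * c (fst q) (snd q)"
    for p q
  define h where "h p = f (fst p) (snd p) - (c (fst p) (snd p))\<^sup>2" for p
  have t_nonneg: "0 \<le> t i j" for i j using c_nonneg c_le_t order_trans by blast
  have G_nonneg: "0 \<le> G p q" for p q
    unfolding G_def using mult_mono[OF c_le_t c_le_t t_nonneg c_nonneg] by simp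
  have f_le_tt: "f i j \<le> t i j * t j i" for i j
    using f_le_t[of i j] f_le_t[of j i] f_sym[of i j]
    by (intro le_mult_if_le_squares t_nonneg) auto
  have h_le_G: "2 * h p \<le> (\<Sum>q\<in>P. G p q)" if "p \<in> P" for p
  proof -
    obtain i j where p: "p = (i, j)" and ij: "i \<noteq> j"
      using \<open>p \<in> P\<close> unfolding P_def by (cases p) auto
    have "G p (i, j) + G p (j, i) = (\<Sum>q\<in>{(i, j), (j, i)}. G p q)" using ij by simp
    also have "\<dots> \<le> (\<Sum>q\<in>P. G p q)" using ij G_nonneg unfolding P_def by (intro sum_mono2) auto
    finally show ?thesis
      using f_le_t[of i j] f_le_tt[of i j] c_sym[of i j]
      unfolding G_def h_def p by (simp add: power2_eq_square)
  qed
  have "(\<Sum>i\<in>UNIV. \<Sum>j\<in>UNIV. f i j) - (\<Sum>i\<in>UNIV. \<Sum>j\<in>UNIV. (c i j)\<^sup>2) = (\<Sum>p\<in>UNIV. h p)"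
    unfolding h_def sum_UNIV_prod by (simp add: sum_subtractf)
  also have "\<dots> = (\<Sum>p\<in>P. h p) + (\<Sum>p\<in>UNIV - P. h p)"
    by (simp add: sum.subset_diff[of P UNIV])
  also have "(\<Sum>p\<in>UNIV - P. h p) \<le> 0"
    by (rule sum_nonpos) (auto simp: P_def h_def f_diag)
  finally have "2 * ((\<Sum>i\<in>UNIV. \<Sum>j\<in>UNIV. f i j) - (\<Sum>i\<in>UNIV. \<Sum>j\<in>UNIV. (c i j)\<^sup>2))
      \<le> (\<Sum>p\<in>P. 2 * h p)"
    by (simp add: sum_distrib_left[symmetric])
  also have "\<dots> \<le> (\<Sum>p\<in>P. \<Sum>q\<in>P. G p q)" by (intro sum_mono h_le_G)
  also have "\<dots> = (\<Sum>p\<in>P. t (fst p) (snd p))\<^sup>2 - (\<Sum>p\<in>P. c (fst p) (snd p))\<^sup>2"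
    unfolding G_def power2_eq_square sum_product by (simp add: sum_subtractf)
  finally show ?thesis unfolding off_diagonal .
qed

theorem proposition6:
  fixes \<rho> :: "complex^('a::finite \<times> 'b::finite)^('a \<times> 'b)"
  assumes "density_op \<rho>"
  shows "(l1_coherence_AB \<rho>)\<^sup>2 - (l1_coherence (ptrace_B \<rho>))\<^sup>2
         \<ge> 2 * (Re (trace (\<rho> ** \<rho>)) - Re (trace (ptrace_B \<rho> ** ptrace_B \<rho>)))"
proof -
  have psd: "psd \<rho>" and herm: "hermitian \<rho>"
    using assms unfolding density_op_def psd_iff by auto
  define t where "t i j = trace_norm (block_B \<rho> i j)" for i j
  define c where "c i j = cmod (ptrace_B \<rho> $ i $ j)" for i j
  define f where "f i j = frob_sq (block_B \<rho> i j)" for i j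
  have "c i j \<le> t i j" for i j
    unfolding c_def t_def ptrace_B_eq_trace_block_B by (rule norm_trace_le_trace_norm)
  moreover have "0 \<le> c i j" for i j
    unfolding c_def by simp
  moreover have "f i j \<le> (t i j)\<^sup>2" for i j
    unfolding f_def t_def by (rule frob_sq_le_trace_norm_sq)
  moreover have "f i i \<le> (c i i)\<^sup>2" for i
    using frob_sq_le_trace_norm_sq psd_trace_norm[OF psd_block_B_diag[OF psd]]
    unfolding f_def c_def ptrace_B_eq_trace_block_B by metis
  moreover have "f j i = f i j" for i j
    unfolding f_def by (rule frob_sq_block_B_swap[OF herm])
  moreover have "c j i = c i j" for i j
    unfolding c_def by (metis hermitian_entry[OF hermitian_ptrace_B[OF herm]] complex_mod_cnj)
  moreover have "Re (trace (\<rho> ** \<rho>)) = (\<Sum>i\<in>UNIV. \<Sum>j\<in>UNIV. f i j)"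
    unfolding f_def trace_sq_hermitian[OF herm] by (rule frob_sq_eq_sum_blocks)
  moreover have "Re (trace (ptrace_B \<rho> ** ptrace_B \<rho>)) = (\<Sum>i\<in>UNIV. \<Sum>j\<in>UNIV. (c i j)\<^sup>2)"
    unfolding c_def trace_sq_hermitian[OF hermitian_ptrace_B[OF herm]] frob_sq_def ..
  ultimately show ?thesis
    unfolding l1_coherence_AB_def l1_coherence_def t_def[symmetric] c_def[symmetric]
    using off_diagonal_square_difference_ge[of c t f] by simp
qed

end
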